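(* Let $V$ satisfy the assumptions $( * )$ (see context), and let $a=-c/24$, $b=h-c/24$. Then exactly one of $-24a$ and $-24b$ is positive, and it equals the effective central charge $\tilde c:=c-24h_{\min}$, where $h_{\min}:=\min(0,h)$.
   Context: Assumptions $( * )$: $V$ is a strongly regular (simple, rational, $C_2$-cofinite, CFT type, self-dual) vertex operator algebra of central charge $c$; $V$ has an irreducible module $M$ of conformal weight $h$ such that $Z_V(\tau)=q^{-c/24}\sum_{n\ge0}\dim V_nq^n$ and $Z_M(\tau)=q^{h-c/24}\sum_{n\ge0}\dim M_{h+n}q^n$ span the 2-dimensional space $\mathfrak{ch}_V$ of characters of irreducible $V$-modules; $\mathfrak{ch}_V$ is exactly the solution space of $(D_0^2+k_1E_4)f=0$, $k_1\in\mathbf{C}$, where $q=e^{2\pi i\tau}$, $D_k=q\frac{d}{dq}-\frac{k}{12}E_2$, $E_2=1-24\sum_{n\ge1}\sigma_1(n)q^n$, $D_0^2=D_2\circ D_0$, $E_4$ the weight-4 Eisenstein series; and the representation of $SL_2(\mathbf{Z})$ on $\mathfrak{ch}_V$ given by $f\mapsto f(\gamma\tau)$ is irreducible. *)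

theory Defs
  imports "HOL-Analysis.Analysis"
begin

definition uhp :: "complex set" where
  "uhp = {\<tau>. Im \<tau> > 0}"

definition qpow :: "complex \<Rightarrow> complex \<Rightarrow> complex" where
  "qpow x \<tau> = exp (2 * of_real pi * \<i> * x * \<tau>)"

definition sigma_k :: "nat \<Rightarrow> nat \<Rightarrow> nat" where
  "sigma_k k n = (\<Sum>d\<in>{d. d dvd n}. d ^ k)"

definition E2 :: "complex \<Rightarrow> complex" where
  "E2 \<tau> = 1 - 24 * (\<Sum>n. of_nat (sigma_k 1 (Suc n)) * qpow (of_nat (Suc n)) \<tau>)"

definition E4 :: "complex \<Rightarrow> complex" where
  "E4 \<tau> = 1 + 240 * (\<Sum>n. of_nat (sigma_k 3 (Suc n)) * qpow (of_nat (Suc n)) \<tau>)"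

text \<open>Serre derivative \<open>D_k = q d/dq - (k/12) E_2\<close>, with \<open>q d/dq = (2 \<pi> i)^{-1} d/d\<tau>\<close>.\<close>
definition serre_D :: "real \<Rightarrow> (complex \<Rightarrow> complex) \<Rightarrow> complex \<Rightarrow> complex" where
  "serre_D k f \<tau> = deriv f \<tau> / (2 * of_real pi * \<i>) - of_real (k / 12) * E2 \<tau> * f \<tau>"

definition D0sq :: "(complex \<Rightarrow> complex) \<Rightarrow> complex \<Rightarrow> complex" where
  "D0sq f = serre_D 2 (serre_D 0 f)"

definition mlde_sol :: "complex \<Rightarrow> (complex \<Rightarrow> complex) \<Rightarrow> bool" where
  "mlde_sol k1 f \<longleftrightarrow> f holomorphic_on uhp \<and>
     (\<forall>\<tau>\<in>uhp. D0sq f \<tau> + k1 * E4 \<tau> * f \<tau> = 0)"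

definition qchar :: "real \<Rightarrow> (nat \<Rightarrow> nat) \<Rightarrow> complex \<Rightarrow> complex" where
  "qchar x d \<tau> = qpow (of_real x) \<tau> * (\<Sum>n. of_nat (d n) * qpow (of_nat n) \<tau>)"

definition SL2Z :: "(int \<times> int \<times> int \<times> int) set" where
  "SL2Z = {(a, b, c, d). a * d - b * c = 1}"

definition sl2_act :: "int \<times> int \<times> int \<times> int \<Rightarrow> (complex \<Rightarrow> complex) \<Rightarrow> complex \<Rightarrow> complex" where
  "sl2_act g f \<tau> = (case g of (a, b, c, d) \<Rightarrow>
      f ((of_int a * \<tau> + of_int b) / (of_int c * \<tau> + of_int d)))"

definition in_span2 :: "(complex \<Rightarrow> complex) \<Rightarrow> (complex \<Rightarrow> complex) \<Rightarrow> (complex \<Rightarrow> complex) \<Rightarrow> bool" where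
  "in_span2 f1 f2 g \<longleftrightarrow> (\<exists>\<alpha> \<beta>. \<forall>\<tau>\<in>uhp. g \<tau> = \<alpha> * f1 \<tau> + \<beta> * f2 \<tau>)"

end

theory Submission
  imports Defs "HOL-Complex_Analysis.Laurent_Convergence" "HOL-Real_Asymp.Real_Asymp"
begin

text \<open>
  Write \<open>Z\<^sub>V = q\<^sup>a F\<^sub>V(q)\<close> and \<open>Z\<^sub>M = q\<^sup>b F\<^sub>M(q)\<close> with \<open>F\<^sub>V(0), F\<^sub>M(0) \<noteq> 0\<close>.
  Substituting a character into the differential equation turns it into a recursion for its
  coefficients whose lowest term is the indicial equation \<open>x\<^sup>2 - x/6 + k\<^sub>1 = 0\<close>; so \<open>a\<close> and \<open>b\<close>
  are roots of it.  If \<open>a = b\<close>, then \<open>T\<close> acts on the span of the characters by the scalar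
  \<open>e\<^sup>2\<^sup>\<pi>\<^sup>i\<^sup>a\<close>, so an eigenvector of \<open>S\<close> is a common eigenvector of the generators \<open>S, T\<close> of
  \<open>SL\<^sub>2(\<int>)\<close>, contradicting irreducibility.  Hence \<open>a + b = 1/6\<close> and \<open>k\<^sub>1 = a b\<close>.  If both
  \<open>a, b \<ge> 0\<close>, all terms of the recursion for the (nonnegative) coefficients of \<open>Z\<^sub>V\<close> are
  nonnegative, which forces \<open>a = 0\<close> and \<open>Z\<^sub>V = 1\<close>, an invariant line, again contradicting
  irreducibility.  So exactly one of \<open>a, b\<close> is negative, namely \<open>min a b = - c\<^sub>e\<^sub>f\<^sub>f / 24\<close>.
\<close>

section \<open>Convergent power series\<close>

lemma norm_less_fps_conv_radius:
  "norm z < 1 \<Longrightarrow> 1 \<le> fps_conv_radius F \<Longrightarrow> norm z < fps_conv_radius F"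
  by (metis ereal_less(3) less_le_trans one_ereal_def)

lemma conv_radius_ge_1_if_poly_bounded:
  fixes f :: "nat \<Rightarrow> complex"
  assumes "\<And>n. norm (f n) \<le> C * (real n + 1) ^ k"
  shows "1 \<le> conv_radius f"
proof -
  let ?g = "\<lambda>n. of_nat (Suc n) ^ k :: complex"
  have "(\<lambda>n. (real (Suc n) / real (Suc (Suc n))) ^ k) \<longlonglongrightarrow> 1 ^ k"
    by (intro tendsto_power) real_asymp
  then have "(\<lambda>n. norm (?g n) / norm (?g (Suc n))) \<longlonglongrightarrow> 1"
    by (simp only: norm_power norm_of_nat power_divide power_one)
  then have radius_g: "conv_radius ?g = 1"
    by (intro conv_radius_ratio_limit_nonzero) (auto simp: one_ereal_def)
  show ?thesis
  proof (rule conv_radius_geI_ex')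
    fix r :: real
    assume r: "0 < r" "ereal r < 1"
    have "summable (\<lambda>n. C * norm (?g n * of_real r ^ n))"
      using r radius_g by (intro summable_mult abs_summable_in_conv_radius) auto
    then show "summable (\<lambda>n. f n * of_real r ^ n)"
    proof (rule summable_comparison_test'[where N = 0])
      fix n
      have "norm (?g n * of_real r ^ n) = real (Suc n) ^ k * r ^ n"
        using r by (simp only: norm_mult norm_power norm_of_nat norm_of_real abs_of_pos)
      moreover have "norm (f n * of_real r ^ n) \<le> C * (real n + 1) ^ k * r ^ n"
        using r assms by (simp add: norm_mult norm_power mult_right_mono)
      ultimately show "norm (f n * of_real r ^ n) \<le> C * norm (?g n * of_real r ^ n)"
        by (simp add: add.commute)
    qed
  qed
qed

lemma fps_eq_0_if_eval_eq_0_punctured_disc: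
  fixes F :: "complex fps"
  assumes F: "1 \<le> fps_conv_radius F"
      and eval_0: "\<And>z. z \<noteq> 0 \<Longrightarrow> norm z < 1 \<Longrightarrow> eval_fps F z = 0"
  shows "F = 0"
proof -
  have "eventually (\<lambda>z. z \<in> ball 0 1) (at (0 :: complex))"
    by (rule eventually_at_in_open') auto
  then have "eventually (\<lambda>z. eval_fps F z = 0) (at 0)"
    unfolding eventually_at_filter by eventually_elim (auto intro: eval_0)
  then have "(eval_fps F \<longlongrightarrow> 0) (at 0)"
    by (rule tendsto_eventually)
  moreover have "isCont (eval_fps F) 0"
    by (intro continuous_eval_fps norm_less_fps_conv_radius F) simp
  ultimately have "eval_fps F 0 = 0"
    unfolding isCont_def by (metis at_neq_bot tendsto_unique)
  moreover have "eventually (\<lambda>z. z \<in> ball 0 1) (nhds (0 :: complex))"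
    by (rule eventually_nhds_in_open) auto
  ultimately have "eventually (\<lambda>z. eval_fps F z = eval_fps 0 z) (nhds 0)"
    by (auto elim!: eventually_mono intro: eval_0)
  moreover have "0 < fps_conv_radius F"
    by (rule less_le_trans[OF _ F]) simp
  ultimately show ?thesis
    by (intro eval_fps_eqD) (auto simp: zero_ereal_def)
qed

section \<open>\<open>q\<close>-expansions on the upper half plane\<close>

lemma open_uhp: "open uhp"
  unfolding uhp_def by (simp add: open_halfspace_Im_gt)

lemma qpow_of_nat: "qpow (of_nat n) \<tau> = qpow 1 \<tau> ^ n"
  unfolding qpow_def exp_of_nat_mult[symmetric] by (simp add: algebra_simps)

lemma qpow_nonzero: "qpow x \<tau> \<noteq> 0"
  unfolding qpow_def by simp

lemma norm_qpow_1_less_1: "\<tau> \<in> uhp \<Longrightarrow> norm (qpow 1 \<tau>) < 1"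
  unfolding qpow_def uhp_def by simp

lemma qpow_1_surj:
  assumes "z \<noteq> 0" "norm z < 1"
  obtains \<tau> where "\<tau> \<in> uhp" "qpow 1 \<tau> = z"
proof
  define \<tau> where "\<tau> = Ln z / (2 * of_real pi * \<i>)"
  show "qpow 1 \<tau> = z"
    unfolding qpow_def \<tau>_def using assms(1) by simp
  have "Im \<tau> = - ln (norm z) / (2 * pi)"
    unfolding \<tau>_def using assms(1) by (simp add: Im_divide power2_eq_square)
  moreover have "ln (norm z) < 0"
    using assms by simp
  ultimately show "\<tau> \<in> uhp"
    unfolding uhp_def by (simp add: divide_neg_pos)
qed

lemma has_field_derivative_qpow:
  "(qpow x has_field_derivative (2 * of_real pi * \<i> * x) * qpow x \<tau>) (at \<tau>)"
  unfolding qpow_def by (auto intro!: derivative_eq_intros)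

lemma qpow_plus_1: "qpow x (\<tau> + 1) = qpow x 1 * qpow x \<tau>"
  unfolding qpow_def by (simp add: exp_add[symmetric] algebra_simps)

definition dims_fps :: "(nat \<Rightarrow> nat) \<Rightarrow> complex fps" where
  "dims_fps d = Abs_fps (\<lambda>n. of_nat (d n))"

lemma fps_nth_dims_fps [simp]: "fps_nth (dims_fps d) n = of_nat (d n)"
  by (simp add: dims_fps_def)

lemma qchar_eq_eval_fps: "qchar x d \<tau> = qpow (of_real x) \<tau> * eval_fps (dims_fps d) (qpow 1 \<tau>)"
  unfolding qchar_def eval_fps_def by (simp add: qpow_of_nat)

lemma qchar_plus_1: "qchar x d (\<tau> + 1) = qpow (of_real x) 1 * qchar x d \<tau>"
proof -
  have "qpow 1 (\<tau> + 1) = qpow 1 \<tau>"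
    unfolding qpow_plus_1 by (simp add: qpow_def)
  then show ?thesis
    unfolding qchar_eq_eval_fps qpow_plus_1[of "of_real x"] by simp
qed

lemma fps_conv_radius_dims_fps:
  assumes "\<forall>\<tau>\<in>uhp. summable (\<lambda>n. of_nat (d n) * qpow (of_nat n) \<tau>)"
  shows "1 \<le> fps_conv_radius (dims_fps d)"
  unfolding fps_conv_radius_def
proof (rule conv_radius_geI_ex')
  fix r :: real
  assume "0 < r" "ereal r < 1"
  then obtain \<tau> where \<tau>: "\<tau> \<in> uhp" "qpow 1 \<tau> = of_real r"
    by (auto intro: qpow_1_surj[of "of_real r"])
  have "summable (\<lambda>n. of_nat (d n) * qpow 1 \<tau> ^ n)"
    using assms \<tau>(1) unfolding qpow_of_nat by blast
  with \<tau>(2) show "summable (\<lambda>n. fps_nth (dims_fps d) n * of_real r ^ n)"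
    by simp
qed

text \<open>The divisors of \<open>0\<close> form an infinite set, so \<open>sigma_k k 0 = 0\<close>: this is what lets the
  Eisenstein series be written as \<open>1 + C * dims_fps (sigma_k k)\<close>.\<close>
lemma sigma_k_0 [simp]: "sigma_k k 0 = 0"
  by (simp add: sigma_k_def)

lemma sigma_k_Suc_0 [simp]: "sigma_k k (Suc 0) = 1"
  by (simp add: sigma_k_def)

lemma sigma_k_le: "sigma_k k n \<le> (n + 1) ^ (k + 1)"
proof (cases "n = 0")
  case False
  have "sigma_k k n \<le> (\<Sum>d\<le>n. d ^ k)"
    unfolding sigma_k_def using False by (intro sum_mono2) (auto intro: dvd_imp_le)
  also have "\<dots> \<le> (\<Sum>d\<le>n. (n + 1) ^ k)"
    by (intro sum_mono power_mono) auto
  finally show ?thesis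
    by simp
qed simp

lemma fps_conv_radius_sigma: "1 \<le> fps_conv_radius (dims_fps (sigma_k k))"
  unfolding fps_conv_radius_def
proof (rule conv_radius_ge_1_if_poly_bounded)
  fix n
  have "real (sigma_k k n) \<le> (real n + 1) ^ (k + 1)"
    using sigma_k_le[of k n] by (metis of_nat_le_iff of_nat_1 of_nat_add of_nat_power)
  then show "norm (fps_nth (dims_fps (sigma_k k)) n) \<le> 1 * (real n + 1) ^ (k + 1)"
    by simp
qed

definition E2_fps :: "complex fps" where
  "E2_fps = 1 - fps_const 24 * dims_fps (sigma_k 1)"

definition E4_fps :: "complex fps" where
  "E4_fps = 1 + fps_const 240 * dims_fps (sigma_k 3)"

lemma fps_conv_radius_E2_fps: "1 \<le> fps_conv_radius E2_fps"
  unfolding E2_fps_def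
  by (intro fps_conv_radius_diff_ge fps_conv_radius_mult_ge fps_conv_radius_sigma) simp_all

lemma fps_conv_radius_E4_fps: "1 \<le> fps_conv_radius E4_fps"
  unfolding E4_fps_def
  by (intro fps_conv_radius_add_ge fps_conv_radius_mult_ge fps_conv_radius_sigma) simp_all

lemma eval_sigma_fps:
  assumes "\<tau> \<in> uhp"
  shows "eval_fps (dims_fps (sigma_k k)) (qpow 1 \<tau>) =
           (\<Sum>n. of_nat (sigma_k k (Suc n)) * qpow (of_nat (Suc n)) \<tau>)"
proof -
  have "(\<lambda>n. of_nat (sigma_k k n) * qpow 1 \<tau> ^ n) sums eval_fps (dims_fps (sigma_k k)) (qpow 1 \<tau>)"
    using sums_eval_fps[OF norm_less_fps_conv_radius[OF norm_qpow_1_less_1[OF assms] fps_conv_radius_sigma]]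
    by simp
  then have "(\<lambda>n. of_nat (sigma_k k (Suc n)) * qpow (of_nat (Suc n)) \<tau>) sums
               eval_fps (dims_fps (sigma_k k)) (qpow 1 \<tau>)"
    by (subst sums_Suc_iff) (simp add: qpow_of_nat del: of_nat_Suc)
  then show ?thesis
    by (simp add: sums_iff)
qed

lemmas fps_conv_radius_ge_1_intros =
  fps_conv_radius_add_ge fps_conv_radius_diff_ge fps_conv_radius_mult_ge fps_conv_radius_sigma

lemma E2_eq_eval_E2_fps: "\<tau> \<in> uhp \<Longrightarrow> E2 \<tau> = eval_fps E2_fps (qpow 1 \<tau>)"
  using norm_qpow_1_less_1[of \<tau>] unfolding E2_def E2_fps_def
  by (simp add: eval_fps_diff eval_fps_mult eval_sigma_fps norm_less_fps_conv_radius
      fps_conv_radius_ge_1_intros)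

lemma E4_eq_eval_E4_fps: "\<tau> \<in> uhp \<Longrightarrow> E4 \<tau> = eval_fps E4_fps (qpow 1 \<tau>)"
  using norm_qpow_1_less_1[of \<tau>] unfolding E4_def E4_fps_def
  by (simp add: eval_fps_add eval_fps_mult eval_sigma_fps norm_less_fps_conv_radius
      fps_conv_radius_ge_1_intros)

text \<open>\<open>theta_fps x A\<close> is \<open>q\<^sup>-\<^sup>x (q d/dq) (q\<^sup>x A(q))\<close>, i.e. \<open>D\<^sub>0\<close> conjugated by \<open>q\<^sup>x\<close>.\<close>
definition theta_fps :: "complex \<Rightarrow> complex fps \<Rightarrow> complex fps" where
  "theta_fps x A = fps_const x * A + fps_X * fps_deriv A"

lemma fps_nth_theta_fps [simp]: "fps_nth (theta_fps x A) n = (x + of_nat n) * fps_nth A n"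
  by (cases n) (auto simp: theta_fps_def fps_X_mult_nth algebra_simps)

lemma fps_conv_radius_theta_fps:
  "r \<le> fps_conv_radius A \<Longrightarrow> r \<le> fps_conv_radius (theta_fps x A)"
  unfolding theta_fps_def
  by (intro fps_conv_radius_add_ge fps_conv_radius_mult_ge order.trans[OF _ fps_conv_radius_deriv])
     simp_all

lemma eval_theta_fps:
  assumes "norm z < 1" "1 \<le> fps_conv_radius A"
  shows "eval_fps (theta_fps x A) z = x * eval_fps A z + z * eval_fps (fps_deriv A) z"
proof -
  have "1 \<le> fps_conv_radius (fps_deriv A)"
    using assms(2) fps_conv_radius_deriv[of A] by (rule order.trans)
  with assms show ?thesis
    unfolding theta_fps_def
    by (simp add: eval_fps_add eval_fps_mult norm_less_fps_conv_radius fps_conv_radius_ge_1_intros)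
qed

lemma serre_D_0_qexp:
  assumes A: "1 \<le> fps_conv_radius A"
      and Z: "\<forall>t\<in>uhp. Z t = qpow x t * eval_fps A (qpow 1 t)"
      and \<tau>: "\<tau> \<in> uhp"
  shows "serre_D 0 Z \<tau> = qpow x \<tau> * eval_fps (theta_fps x A) (qpow 1 \<tau>)"
proof -
  let ?q = "qpow 1 \<tau>" and ?c = "2 * of_real pi * \<i> :: complex"
  have q: "norm ?q < 1"
    using \<tau> by (rule norm_qpow_1_less_1)
  have "((\<lambda>t. eval_fps A (qpow 1 t)) has_field_derivative
          eval_fps (fps_deriv A) ?q * (?c * 1 * ?q)) (at \<tau>)"
    using has_field_derivative_eval_fps[OF norm_less_fps_conv_radius[OF q A]]
    by (rule DERIV_chain2) (rule has_field_derivative_qpow)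
  from DERIV_mult[OF has_field_derivative_qpow this]
  have "((\<lambda>t. qpow x t * eval_fps A (qpow 1 t)) has_field_derivative
          ?c * (qpow x \<tau> * (x * eval_fps A ?q + ?q * eval_fps (fps_deriv A) ?q))) (at \<tau>)"
    by (rule DERIV_cong) (simp add: algebra_simps)
  then have "(Z has_field_derivative
          ?c * (qpow x \<tau> * eval_fps (theta_fps x A) ?q)) (at \<tau>)"
    using Z \<tau> open_uhp by (auto simp: eval_theta_fps[OF q A] intro: has_field_derivative_transform_within_open)
  then show ?thesis
    unfolding serre_D_def by (simp add: DERIV_imp_deriv)
qed

lemma serre_D_eq_serre_D_0: "serre_D k f \<tau> = serre_D 0 f \<tau> - of_real (k / 12) * E2 \<tau> * f \<tau>"
  unfolding serre_D_def by simp

section \<open>The differential equation on coefficients\<close>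

text \<open>\<open>mlde_fps k1 x A\<close> is \<open>q\<^sup>-\<^sup>x (D\<^sub>2 D\<^sub>0 + k1 E\<^sub>4) (q\<^sup>x A(q))\<close> as a power series in \<open>q\<close>.\<close>
definition mlde_fps :: "complex \<Rightarrow> complex \<Rightarrow> complex fps \<Rightarrow> complex fps" where
  "mlde_fps k1 x A = theta_fps x (theta_fps x A) - fps_const (1 / 6) * E2_fps * theta_fps x A
                       + fps_const k1 * E4_fps * A"

lemma fps_conv_radius_mlde_fps: "1 \<le> fps_conv_radius A \<Longrightarrow> 1 \<le> fps_conv_radius (mlde_fps k1 x A)"
  unfolding mlde_fps_def
  by (intro fps_conv_radius_ge_1_intros fps_conv_radius_theta_fps fps_conv_radius_E2_fps
      fps_conv_radius_E4_fps) simp_all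

lemma eval_mlde_fps:
  assumes "norm z < 1" "1 \<le> fps_conv_radius A"
  shows "eval_fps (mlde_fps k1 x A) z =
           eval_fps (theta_fps x (theta_fps x A)) z
           - 1 / 6 * eval_fps E2_fps z * eval_fps (theta_fps x A) z
           + k1 * eval_fps E4_fps z * eval_fps A z"
  using assms unfolding mlde_fps_def
  by (simp add: eval_fps_add eval_fps_diff eval_fps_mult norm_less_fps_conv_radius
      fps_conv_radius_ge_1_intros fps_conv_radius_theta_fps fps_conv_radius_E2_fps
      fps_conv_radius_E4_fps)

lemma mlde_fps_eq_0:
  assumes A: "1 \<le> fps_conv_radius A"
      and Z: "\<forall>t\<in>uhp. Z t = qpow x t * eval_fps A (qpow 1 t)"
      and sol: "mlde_sol k1 Z"
  shows "mlde_fps k1 x A = 0"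
proof (rule fps_eq_0_if_eval_eq_0_punctured_disc)
  show "1 \<le> fps_conv_radius (mlde_fps k1 x A)"
    using A by (rule fps_conv_radius_mlde_fps)
  fix z :: complex
  assume "z \<noteq> 0" "norm z < 1"
  then obtain \<tau> where \<tau>: "\<tau> \<in> uhp" "qpow 1 \<tau> = z"
    by (rule qpow_1_surj)
  have D0: "\<forall>t\<in>uhp. serre_D 0 Z t = qpow x t * eval_fps (theta_fps x A) (qpow 1 t)"
    using serre_D_0_qexp[OF A Z] by blast
  have "D0sq Z \<tau> + k1 * E4 \<tau> * Z \<tau> = qpow x \<tau> * eval_fps (mlde_fps k1 x A) z"
    using \<tau> Z \<open>norm z < 1\<close> serre_D_0_qexp[OF fps_conv_radius_theta_fps[OF A] D0 \<tau>(1)] D0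
    unfolding D0sq_def serre_D_eq_serre_D_0[of 2]
    by (simp add: eval_mlde_fps A norm_qpow_1_less_1 E2_eq_eval_E2_fps E4_eq_eval_E4_fps
        algebra_simps)
  moreover have "D0sq Z \<tau> + k1 * E4 \<tau> * Z \<tau> = 0"
    using sol \<tau>(1) unfolding mlde_sol_def by blast
  ultimately show "eval_fps (mlde_fps k1 x A) z = 0"
    by (simp add: qpow_nonzero)
qed

lemma fps_nth_mlde_fps:
  "fps_nth (mlde_fps k1 x A) n =
     ((x + of_nat n) ^ 2 - (x + of_nat n) / 6 + k1) * fps_nth A n
     + (\<Sum>j=0..n. (4 * of_nat (sigma_k 1 (n - j)) * (x + of_nat j) + 240 * k1 * of_nat (sigma_k 3 (n - j)))
                   * fps_nth A j)"
proof -
  let ?S = "\<lambda>k. dims_fps (sigma_k k)"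
  have expand: "mlde_fps k1 x A = theta_fps x (theta_fps x A) - fps_const (1 / 6) * theta_fps x A + fps_const k1 * A
          + (fps_const 4 * (?S 1 * theta_fps x A) + fps_const (240 * k1) * (?S 3 * A))"
    unfolding mlde_fps_def E2_fps_def E4_fps_def
    by (simp add: algebra_simps flip: fps_const_mult)
  show ?thesis
    unfolding expand fps_add_nth fps_sub_nth fps_mult_left_const_nth
    by (simp add: fps_mult_nth sum_distrib_left sum.distrib algebra_simps power2_eq_square)
qed

lemma dims_trivial_if_nonneg_exponents:
  fixes a b :: real
  assumes mlde: "mlde_fps (of_real (a * b)) (of_real a) (dims_fps d) = 0"
      and a: "0 \<le> a" and b: "0 \<le> b" and ab: "a + b = 1 / 6" and d0: "d 0 = 1"
  shows "a = 0 \<and> (\<forall>n>0. d n = 0)"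
proof -
  define L where "L n = (a + real n) ^ 2 - (a + real n) / 6 + a * b" for n
  define T where "T n j = (4 * real (sigma_k 1 (n - j)) * (a + real j)
                          + 240 * (a * b) * real (sigma_k 3 (n - j))) * real (d j)" for n j
  have T_nonneg: "0 \<le> T n j" for n j
    using a b by (simp add: T_def)
  have L_pos: "0 < L n" if "0 < n" for n
  proof -
    have b_eq: "b = 1 / 6 - a"
      using ab by simp
    have "L n = (a + real n) * (real n - b) + a * b"
      unfolding L_def b_eq by (simp add: power2_eq_square field_simps)
    moreover have "0 < (a + real n) * (real n - b)"
      using a ab b that by (intro mult_pos_pos) linarith+
    ultimately show ?thesis
      using a b by (simp add: add_pos_nonneg)
  qed
  \<comment> \<open>For nonnegative exponents every term of the coefficient recursion is nonnegative.\<close>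
  have coeff: "L n * real (d n) + (\<Sum>j=0..n. T n j) = 0" for n
  proof -
    have "complex_of_real (L n * real (d n) + (\<Sum>j=0..n. T n j)) =
            fps_nth (mlde_fps (of_real (a * b)) (of_real a) (dims_fps d)) n"
      unfolding fps_nth_mlde_fps L_def T_def by simp
    then show ?thesis
      unfolding mlde fps_zero_nth of_real_eq_0_iff .
  qed
  have vanish: "L n * real (d n) = 0 \<and> (\<forall>j\<in>{0..n}. T n j = 0)" if "0 < n" for n
    using coeff[of n] T_nonneg L_pos[OF that]
    by (subst (asm) add_nonneg_eq_0_iff) (auto simp: sum_nonneg sum_nonneg_eq_0_iff)
  then have "\<forall>n>0. d n = 0"
    using L_pos by (metis less_irrefl mult_eq_0_iff of_nat_eq_0_iff)
  moreover have "T 1 0 = 0"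
    using vanish[of 1] by simp
  then have "a = 0"
    using a b d0 unfolding T_def by (simp add: add_nonneg_eq_0_iff)
  ultimately show ?thesis
    by blast
qed

lemma mlde_fps_qchar_eq_0:
  assumes "\<forall>\<tau>\<in>uhp. summable (\<lambda>n. of_nat (d n) * qpow (of_nat n) \<tau>)"
      and "mlde_sol k1 (qchar x d)"
  shows "mlde_fps k1 (of_real x) (dims_fps d) = 0"
  using fps_conv_radius_dims_fps[OF assms(1)] _ assms(2)
  by (rule mlde_fps_eq_0) (simp add: qchar_eq_eval_fps)

lemma indicial_equation_qchar:
  assumes "\<forall>\<tau>\<in>uhp. summable (\<lambda>n. of_nat (d n) * qpow (of_nat n) \<tau>)"
      and "mlde_sol k1 (qchar x d)" and "d 0 \<noteq> 0"
  shows "(of_real x)\<^sup>2 - of_real x / 6 + k1 = 0"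
  using fps_nth_mlde_fps[of k1 "of_real x" "dims_fps d" 0] mlde_fps_qchar_eq_0[OF assms(1,2)] assms(3)
  by simp

lemma indicial_roots_distinct:
  fixes a b :: real and k1 :: complex
  assumes a: "(of_real a)\<^sup>2 - of_real a / 6 + k1 = 0" and b: "(of_real b)\<^sup>2 - of_real b / 6 + k1 = 0"
      and "a \<noteq> b"
  shows "a + b = 1 / 6" "k1 = of_real (a * b)"
proof -
  have "complex_of_real ((a - b) * (a + b - 1 / 6))
          = ((of_real a)\<^sup>2 - of_real a / 6 + k1) - ((of_real b)\<^sup>2 - of_real b / 6 + k1)"
    by (simp add: power2_eq_square field_simps)
  then have "(a - b) * (a + b - 1 / 6) = 0"
    unfolding a b diff_self of_real_eq_0_iff .
  then show ab: "a + b = 1 / 6"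
    using \<open>a \<noteq> b\<close> by simp
  then have b_eq: "b = 1 / 6 - a"
    by simp
  have "k1 - of_real (a * b) = (of_real a)\<^sup>2 - of_real a / 6 + k1"
    unfolding b_eq by (simp add: power2_eq_square field_simps)
  then show "k1 = of_real (a * b)"
    unfolding a by simp
qed

lemma qchar_eq_1_if_nonneg_exponents:
  assumes "\<forall>\<tau>\<in>uhp. summable (\<lambda>n. of_nat (d n) * qpow (of_nat n) \<tau>)"
      and "mlde_sol (of_real (a * b)) (qchar a d)"
      and "0 \<le> a" "0 \<le> b" "a + b = 1 / 6" "d 0 = 1"
  shows "qchar a d = (\<lambda>\<tau>. 1)"
proof -
  have "a = 0 \<and> (\<forall>n>0. d n = 0)"
    using mlde_fps_qchar_eq_0[OF assms(1,2)] assms(3-6) by (rule dims_trivial_if_nonneg_exponents)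
  moreover have "dims_fps d = 1"
    using calculation \<open>d 0 = 1\<close> by (intro fps_ext) auto
  ultimately show ?thesis
    unfolding qchar_eq_eval_fps by (simp add: qpow_def)
qed

section \<open>Common eigenfunctions of \<open>SL\<^sub>2(\<int>)\<close>\<close>

definition SL2Z_eigenfunction :: "(complex \<Rightarrow> complex) \<Rightarrow> bool" where
  "SL2Z_eigenfunction f \<longleftrightarrow> (\<forall>g\<in>SL2Z. \<exists>\<mu>. \<forall>\<tau>\<in>uhp. sl2_act g f \<tau> = \<mu> * f \<tau>)"

lemma sl2_act_apply:
  "sl2_act (a, b, c, d) f \<tau> = f ((of_int a * \<tau> + of_int b) / (of_int c * \<tau> + of_int d))"
  by (simp add: sl2_act_def)

lemma sl2_act_S: "sl2_act (0, - 1, 1, 0) f = (\<lambda>\<tau>. f (- 1 / \<tau>))"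
  by (rule ext) (simp add: sl2_act_def)

lemma S_in_SL2Z: "(0, - 1, 1, 0) \<in> SL2Z"
  by (simp add: SL2Z_def)

lemma uhp_add_of_int: "\<tau> \<in> uhp \<Longrightarrow> \<tau> + of_int k \<in> uhp"
  unfolding uhp_def by simp

lemma uhp_nonzero: "\<tau> \<in> uhp \<Longrightarrow> \<tau> \<noteq> 0"
  unfolding uhp_def by auto

lemma uhp_minus_inverse: "\<tau> \<in> uhp \<Longrightarrow> - 1 / \<tau> \<in> uhp"
  unfolding uhp_def by (auto simp: Im_divide intro!: divide_pos_pos add_nonneg_pos)

lemma translation_iterate:
  fixes f :: "complex \<Rightarrow> complex"
  assumes "\<forall>\<tau>\<in>uhp. f (\<tau> + of_int s) = l * f \<tau>" and "\<tau> \<in> uhp"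
  shows "f (\<tau> + of_int (int n * s)) = l ^ n * f \<tau>"
  using assms(2)
proof (induction n arbitrary: \<tau>)
  case (Suc n)
  have "f (\<tau> + of_int (int (Suc n) * s)) = f ((\<tau> + of_int s) + of_int (int n * s))"
    by (simp add: algebra_simps)
  also have "\<dots> = l ^ n * f (\<tau> + of_int s)"
    using Suc uhp_add_of_int by blast
  also have "\<dots> = l ^ Suc n * f \<tau>"
    using assms(1) Suc.prems by (simp add: mult_ac)
  finally show ?case .
qed simp

lemma translation_eigenfunction_int:
  fixes f :: "complex \<Rightarrow> complex"
  assumes T: "\<forall>\<tau>\<in>uhp. f (\<tau> + 1) = l * f \<tau>" and l: "l \<noteq> 0"
  shows "\<exists>\<nu>. \<forall>\<tau>\<in>uhp. f (\<tau> + of_int k) = \<nu> * f \<tau>"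
proof (cases "0 \<le> k")
  case True
  then have "\<forall>\<tau>\<in>uhp. f (\<tau> + of_int k) = l ^ nat k * f \<tau>"
    using translation_iterate[of f 1 l _ "nat k"] T by simp
  then show ?thesis
    by blast
next
  case False
  have "\<forall>\<tau>\<in>uhp. f (\<tau> + of_int (- 1)) = inverse l * f \<tau>"
  proof
    fix \<tau> :: complex
    assume "\<tau> \<in> uhp"
    then have "f ((\<tau> + of_int (- 1)) + 1) = l * f (\<tau> + of_int (- 1))"
      using T uhp_add_of_int by blast
    then have "f \<tau> = l * f (\<tau> + of_int (- 1))"
      by simp
    then show "f (\<tau> + of_int (- 1)) = inverse l * f \<tau>"
      using l by (simp add: field_simps)
  qed
  then have "\<forall>\<tau>\<in>uhp. f (\<tau> + of_int k) = inverse l ^ nat (- k) * f \<tau>"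
    using translation_iterate[of f "- 1" "inverse l" _ "nat (- k)"] False by simp
  then show ?thesis
    by blast
qed

lemma sl2_act_translation:
  assumes "a * d = 1"
  shows "sl2_act (a, b, 0, d) f \<tau> = f (\<tau> + of_int (b * d))"
proof -
  have "a = d \<and> (d = 1 \<or> d = - 1)"
    using assms by (auto simp: zmult_eq_1_iff)
  then show ?thesis
    by (auto simp: sl2_act_apply)
qed

text \<open>The matrix identity \<open>(a, b; c, d) = (b - a n, - a; r, - c) S T\<^sup>n\<close> for \<open>d = c n + r\<close>.\<close>
lemma sl2_act_euclid_step:
  assumes d: "d = c * n + r" and w: "\<tau> + of_int n \<noteq> 0"
  shows "sl2_act (a, b, c, d) f \<tau> = sl2_act (b - a * n, - a, r, - c) f (- 1 / (\<tau> + of_int n))"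
proof -
  have num: "of_int (b - a * n) * (- 1 / (\<tau> + of_int n)) + of_int (- a)
               = - (of_int a * \<tau> + of_int b) / (\<tau> + of_int n)"
    using w by (simp add: field_simps)
  have den: "of_int r * (- 1 / (\<tau> + of_int n)) + of_int (- c)
               = - (of_int c * \<tau> + of_int d) / (\<tau> + of_int n)"
    using w unfolding d by (simp add: field_simps)
  have cancel: "(- X / (\<tau> + of_int n)) / (- Y / (\<tau> + of_int n)) = X / Y" for X Y
    using w by simp
  show ?thesis
    unfolding sl2_act_apply num den cancel ..
qed

lemma sl2_act_eigen_if_T_S_eigen:
  fixes f :: "complex \<Rightarrow> complex"
  assumes T: "\<forall>\<tau>\<in>uhp. f (\<tau> + 1) = l * f \<tau>" and l: "l \<noteq> 0"
      and S: "\<forall>\<tau>\<in>uhp. f (- 1 / \<tau>) = m * f \<tau>"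
      and det: "a * d - b * c = 1"
  shows "\<exists>\<nu>. \<forall>\<tau>\<in>uhp. sl2_act (a, b, c, d) f \<tau> = \<nu> * f \<tau>"
  using det
proof (induction "nat \<bar>c\<bar>" arbitrary: a b c d rule: less_induct)
  case less
  show ?case
  proof (cases "c = 0")
    case True
    obtain \<nu> where "\<forall>\<tau>\<in>uhp. f (\<tau> + of_int (b * d)) = \<nu> * f \<tau>"
      using translation_eigenfunction_int[OF T l] by blast
    then show ?thesis
      using less.prems True sl2_act_translation[of a d b f] by auto
  next
    case False
    define n r where "n = d div c" and "r = d mod c"
    have d_eq: "d = c * n + r"
      unfolding n_def r_def by simp
    have "nat \<bar>r\<bar> < nat \<bar>c\<bar>"
      unfolding r_def using False abs_mod_less[of c d] by simp
    moreover have "(b - a * n) * (- c) - (- a) * r = 1"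
      using less.prems unfolding d_eq by (simp add: algebra_simps)
    ultimately obtain \<nu>1 where \<nu>1: "\<forall>\<sigma>\<in>uhp. sl2_act (b - a * n, - a, r, - c) f \<sigma> = \<nu>1 * f \<sigma>"
      using less.hyps by blast
    obtain \<nu>2 where \<nu>2: "\<forall>\<tau>\<in>uhp. f (\<tau> + of_int n) = \<nu>2 * f \<tau>"
      using translation_eigenfunction_int[OF T l] by blast
    have "sl2_act (a, b, c, d) f \<tau> = (\<nu>1 * m * \<nu>2) * f \<tau>" if \<tau>: "\<tau> \<in> uhp" for \<tau>
    proof -
      have w: "\<tau> + of_int n \<in> uhp"
        using \<tau> by (rule uhp_add_of_int)
      have "sl2_act (a, b, c, d) f \<tau> = \<nu>1 * f (- 1 / (\<tau> + of_int n))"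
        using \<nu>1 w uhp_minus_inverse uhp_nonzero by (simp add: sl2_act_euclid_step[OF d_eq])
      also have "\<dots> = (\<nu>1 * m * \<nu>2) * f \<tau>"
        using S \<nu>2 w \<tau> by simp
      finally show ?thesis .
    qed
    then show ?thesis
      by blast
  qed
qed

lemma SL2Z_eigenfunction_if_T_S_eigen:
  fixes f :: "complex \<Rightarrow> complex"
  assumes "\<forall>\<tau>\<in>uhp. f (\<tau> + 1) = l * f \<tau>" "l \<noteq> 0" "\<forall>\<tau>\<in>uhp. f (- 1 / \<tau>) = m * f \<tau>"
  shows "SL2Z_eigenfunction f"
  unfolding SL2Z_eigenfunction_def SL2Z_def using sl2_act_eigen_if_T_S_eigen[OF assms] by blast

lemma SL2Z_eigenfunction_const: "SL2Z_eigenfunction (\<lambda>\<tau>. z)"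
  unfolding SL2Z_eigenfunction_def by (auto simp: sl2_act_def split: prod.splits intro: exI[of _ 1])

lemma complex_2x2_left_eigenvector:
  fixes p q r s :: complex
  obtains \<alpha> \<beta> \<mu> where "(\<alpha>, \<beta>) \<noteq> (0, 0)" "\<alpha> * p + \<beta> * r = \<mu> * \<alpha>" "\<alpha> * q + \<beta> * s = \<mu> * \<beta>"
proof -
  define w where "w = csqrt ((p + s)\<^sup>2 - 4 * (p * s - q * r))"
  define \<mu> where "\<mu> = (p + s + w) / 2"
  have "4 * (\<mu> * \<mu> - (p + s) * \<mu> + (p * s - q * r)) = w\<^sup>2 - ((p + s)\<^sup>2 - 4 * (p * s - q * r))"
    unfolding \<mu>_def by (simp add: field_simps power2_eq_square)
  then have char: "\<mu> * \<mu> - (p + s) * \<mu> + (p * s - q * r) = 0"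
    unfolding w_def power2_csqrt diff_self mult_eq_0_iff by simp
  show ?thesis
  proof (cases "r = 0")
    case True
    then show ?thesis
      by (intro that[of 0 1 s]) simp_all
  next
    case False
    show ?thesis
    proof (rule that[of r "\<mu> - p" \<mu>])
      show "r * q + (\<mu> - p) * s = \<mu> * (\<mu> - p)"
        using char by (simp add: algebra_simps)
    qed (use False in \<open>simp_all add: algebra_simps\<close>)
  qed
qed

lemma S_eigenfunction_in_span:
  assumes "in_span2 f1 f2 (\<lambda>\<tau>. f1 (- 1 / \<tau>))" "in_span2 f1 f2 (\<lambda>\<tau>. f2 (- 1 / \<tau>))"
  obtains \<alpha> \<beta> \<mu> where "(\<alpha>, \<beta>) \<noteq> (0, 0)"
    "\<forall>\<tau>\<in>uhp. \<alpha> * f1 (- 1 / \<tau>) + \<beta> * f2 (- 1 / \<tau>) = \<mu> * (\<alpha> * f1 \<tau> + \<beta> * f2 \<tau>)"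
proof -
  obtain p q where pq: "\<forall>\<tau>\<in>uhp. f1 (- 1 / \<tau>) = p * f1 \<tau> + q * f2 \<tau>"
    using assms(1) unfolding in_span2_def by blast
  obtain r s where rs: "\<forall>\<tau>\<in>uhp. f2 (- 1 / \<tau>) = r * f1 \<tau> + s * f2 \<tau>"
    using assms(2) unfolding in_span2_def by blast
  obtain \<alpha> \<beta> \<mu> where ev: "(\<alpha>, \<beta>) \<noteq> (0, 0)" "\<alpha> * p + \<beta> * r = \<mu> * \<alpha>" "\<alpha> * q + \<beta> * s = \<mu> * \<beta>"
    by (rule complex_2x2_left_eigenvector)
  have "\<alpha> * f1 (- 1 / \<tau>) + \<beta> * f2 (- 1 / \<tau>) = \<mu> * (\<alpha> * f1 \<tau> + \<beta> * f2 \<tau>)" if "\<tau> \<in> uhp" for \<tau>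
  proof -
    have "\<alpha> * f1 (- 1 / \<tau>) + \<beta> * f2 (- 1 / \<tau>) = (\<alpha> * p + \<beta> * r) * f1 \<tau> + (\<alpha> * q + \<beta> * s) * f2 \<tau>"
      using pq rs that by (simp add: algebra_simps)
    then show ?thesis
      unfolding ev(2,3) by (simp add: algebra_simps)
  qed
  with ev(1) show ?thesis
    by (intro that) auto
qed

lemma common_exponent_SL2Z_eigenfunction:
  assumes "in_span2 (qchar x d1) (qchar x d2) (\<lambda>\<tau>. qchar x d1 (- 1 / \<tau>))"
      and "in_span2 (qchar x d1) (qchar x d2) (\<lambda>\<tau>. qchar x d2 (- 1 / \<tau>))"
  obtains \<alpha> \<beta> where "(\<alpha>, \<beta>) \<noteq> (0, 0)"
    "SL2Z_eigenfunction (\<lambda>\<tau>. \<alpha> * qchar x d1 \<tau> + \<beta> * qchar x d2 \<tau>)"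
proof -
  obtain \<alpha> \<beta> \<mu> where ev: "(\<alpha>, \<beta>) \<noteq> (0, 0)"
    "\<forall>\<tau>\<in>uhp. \<alpha> * qchar x d1 (- 1 / \<tau>) + \<beta> * qchar x d2 (- 1 / \<tau>)
              = \<mu> * (\<alpha> * qchar x d1 \<tau> + \<beta> * qchar x d2 \<tau>)"
    using S_eigenfunction_in_span[OF assms] by blast
  have "\<forall>\<tau>\<in>uhp. \<alpha> * qchar x d1 (\<tau> + 1) + \<beta> * qchar x d2 (\<tau> + 1)
              = qpow (of_real x) 1 * (\<alpha> * qchar x d1 \<tau> + \<beta> * qchar x d2 \<tau>)"
    by (simp add: qchar_plus_1 algebra_simps)
  then have "SL2Z_eigenfunction (\<lambda>\<tau>. \<alpha> * qchar x d1 \<tau> + \<beta> * qchar x d2 \<tau>)"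
    using qpow_nonzero ev(2) by (rule SL2Z_eigenfunction_if_T_S_eigen)
  with ev(1) show ?thesis
    by (rule that)
qed

theorem lemma2p6:
  fixes c h :: real and k1 :: complex and dimV dimM :: "nat \<Rightarrow> nat"
  defines "ZV \<equiv> qchar (- c / 24) dimV"
      and "ZM \<equiv> qchar (h - c / 24) dimM"
  assumes CFT_type: "dimV 0 = 1"
      and M_weight: "dimM 0 \<ge> 1"
      and conv_V: "\<forall>\<tau>\<in>uhp. summable (\<lambda>n. of_nat (dimV n) * qpow (of_nat n) \<tau>)"
      and conv_M: "\<forall>\<tau>\<in>uhp. summable (\<lambda>n. of_nat (dimM n) * qpow (of_nat n) \<tau>)"
      and lin_indep: "\<forall>\<alpha> \<beta>. (\<forall>\<tau>\<in>uhp. \<alpha> * ZV \<tau> + \<beta> * ZM \<tau> = 0) \<longrightarrow> \<alpha> = 0 \<and> \<beta> = 0"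
      and sol_space: "\<forall>f. mlde_sol k1 f \<longleftrightarrow> in_span2 ZV ZM f"
      and invariant: "\<forall>g\<in>SL2Z. \<forall>f. in_span2 ZV ZM f \<longrightarrow> in_span2 ZV ZM (sl2_act g f)"
      and irreducible: "\<forall>\<alpha> \<beta>. (\<alpha>, \<beta>) \<noteq> (0, 0) \<longrightarrow>
          (\<exists>g\<in>SL2Z. \<not> (\<exists>\<mu>. \<forall>\<tau>\<in>uhp.
              sl2_act g (\<lambda>t. \<alpha> * ZV t + \<beta> * ZM t) \<tau> = \<mu> * (\<alpha> * ZV \<tau> + \<beta> * ZM \<tau>)))"
  shows "let a = - c / 24; b = h - c / 24; ceff = c - 24 * min 0 h in
         (-24 * a > 0 \<and> \<not> (-24 * b > 0) \<and> -24 * a = ceff) \<or>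
         (-24 * b > 0 \<and> \<not> (-24 * a > 0) \<and> -24 * b = ceff)"
proof -
  define a b where "a = - c / 24" and "b = h - c / 24"
  have ZV_eq: "ZV = qchar a dimV" and ZM_eq: "ZM = qchar b dimM"
    unfolding ZV_def ZM_def a_def b_def by simp_all
  have no_eigen: "\<not> SL2Z_eigenfunction (\<lambda>\<tau>. \<alpha> * ZV \<tau> + \<beta> * ZM \<tau>)" if "(\<alpha>, \<beta>) \<noteq> (0, 0)" for \<alpha> \<beta>
    using irreducible that unfolding SL2Z_eigenfunction_def by (meson bexI)
  have span: "in_span2 ZV ZM ZV" "in_span2 ZV ZM ZM"
    unfolding in_span2_def by (intro exI[of _ 1] exI[of _ 0], simp) (intro exI[of _ 0] exI[of _ 1], simp)
  then have sol: "mlde_sol k1 (qchar a dimV)" "mlde_sol k1 (qchar b dimM)"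
    using sol_space unfolding ZV_eq ZM_eq by simp_all
  have span_S: "in_span2 ZV ZM (\<lambda>\<tau>. ZV (- 1 / \<tau>))" "in_span2 ZV ZM (\<lambda>\<tau>. ZM (- 1 / \<tau>))"
    using invariant[rule_format, OF S_in_SL2Z] span unfolding sl2_act_S by simp_all
  have "a \<noteq> b"
  proof
    assume "a = b"
    obtain \<alpha> \<beta> where "(\<alpha>, \<beta>) \<noteq> (0, 0)" "SL2Z_eigenfunction (\<lambda>\<tau>. \<alpha> * ZV \<tau> + \<beta> * ZM \<tau>)"
      using span_S unfolding ZV_eq ZM_eq \<open>a = b\<close> by (rule common_exponent_SL2Z_eigenfunction)
    with no_eigen show False
      by blast
  qed
  moreover have "(of_real a)\<^sup>2 - of_real a / 6 + k1 = 0" "(of_real b)\<^sup>2 - of_real b / 6 + k1 = 0"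
    using indicial_equation_qchar[OF conv_V sol(1)] indicial_equation_qchar[OF conv_M sol(2)]
      CFT_type M_weight by simp_all
  ultimately have ab: "a + b = 1 / 6" and k1: "k1 = of_real (a * b)"
    using indicial_roots_distinct by blast+
  have "\<not> (0 \<le> a \<and> 0 \<le> b)"
    using qchar_eq_1_if_nonneg_exponents[OF conv_V sol(1)[unfolded k1] _ _ ab CFT_type]
      no_eigen[of 1 0] SL2Z_eigenfunction_const[of 1] unfolding ZV_eq by auto
  with ab show ?thesis
    unfolding Let_def a_def b_def by (auto simp: min_def)
qed

end
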